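(* Let $G$ be a graph, $\varphi$ a $4$-colouring of $G$, and $v$ a vertex of $G$ of degree $4$ that is $\varphi$-frozen. If $v$ has two $\varphi$-frozen neighbours $u_1,u_2$ with $\varphi(u_1)=\varphi(u_2)$, then all neighbours of $v$ are $\varphi$-frozen.
   Context: Colourings are proper $4$-colourings (colours $\{1,2,3,4\}$); a recolouring sequence is a sequence of proper $4$-colourings in which consecutive ones differ on exactly one vertex. A vertex $v$ is $\varphi$-frozen if $\gamma(v)=\varphi(v)$ for every $4$-colouring $\gamma$ obtainable from $\varphi$ by a recolouring sequence. *)

theory Defs
  imports Main
begin

definition graph :: "'a set \<Rightarrow> ('a \<Rightarrow> 'a \<Rightarrow> bool) \<Rightarrow> bool" where
  "graph V E \<longleftrightarrow> finite V \<and> (\<forall>x y. E x y \<longrightarrow> x \<in> V \<and> y \<in> V) \<and>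
     (\<forall>x y. E x y \<longrightarrow> E y x) \<and> (\<forall>x. \<not> E x x)"

definition neighbours :: "('a \<Rightarrow> 'a \<Rightarrow> bool) \<Rightarrow> 'a \<Rightarrow> 'a set" where
  "neighbours E v = {u. E v u}"

definition degree :: "('a \<Rightarrow> 'a \<Rightarrow> bool) \<Rightarrow> 'a \<Rightarrow> nat" where
  "degree E v = card (neighbours E v)"

definition colouring4 :: "'a set \<Rightarrow> ('a \<Rightarrow> 'a \<Rightarrow> bool) \<Rightarrow> ('a \<Rightarrow> nat) \<Rightarrow> bool" where
  "colouring4 V E c \<longleftrightarrow> (\<forall>x\<in>V. c x \<in> {1,2,3,4}) \<and> (\<forall>x. x \<notin> V \<longrightarrow> c x = 0) \<and>
     (\<forall>x y. E x y \<longrightarrow> c x \<noteq> c y)"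

definition recolour_step :: "'a set \<Rightarrow> ('a \<Rightarrow> 'a \<Rightarrow> bool) \<Rightarrow> ('a \<Rightarrow> nat) \<Rightarrow> ('a \<Rightarrow> nat) \<Rightarrow> bool" where
  "recolour_step V E c d \<longleftrightarrow> colouring4 V E c \<and> colouring4 V E d \<and>
     (\<exists>!x. c x \<noteq> d x)"

definition reachable :: "'a set \<Rightarrow> ('a \<Rightarrow> 'a \<Rightarrow> bool) \<Rightarrow> ('a \<Rightarrow> nat) \<Rightarrow> ('a \<Rightarrow> nat) \<Rightarrow> bool" where
  "reachable V E = (recolour_step V E)\<^sup>*\<^sup>*"

definition frozen :: "'a set \<Rightarrow> ('a \<Rightarrow> 'a \<Rightarrow> bool) \<Rightarrow> ('a \<Rightarrow> nat) \<Rightarrow> 'a \<Rightarrow> bool" where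
  "frozen V E \<phi> v \<longleftrightarrow> (\<forall>\<gamma>. colouring4 V E \<gamma> \<longrightarrow> reachable V E \<phi> \<gamma> \<longrightarrow> \<gamma> v = \<phi> v)"

end

theory Submission
  imports Defs
begin

text \<open>Since v is frozen, in every reachable colouring the three colours other than that of v
  appear on the neighbourhood of v, for otherwise v could be recoloured. Two of the four
  neighbours are frozen with a common colour, so the other two neighbours w1, w2 carry exactly
  the two remaining colours in every reachable colouring. A single recolouring step changes at
  most one of w1, w2, and then the unchanged one forces the colour of the other; by induction
  along the recolouring sequence both keep their colours.\<close>

lemma reachable_colouring4:
  assumes "reachable V E \<phi> \<gamma>" "colouring4 V E \<phi>"
  shows "colouring4 V E \<gamma>"
  using assms unfolding reachable_def
  by (induction rule: rtranclp_induct) (auto simp: recolour_step_def)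

lemma frozenD:
  assumes "frozen V E \<phi> v" "colouring4 V E \<phi>" "reachable V E \<phi> \<gamma>"
  shows "\<gamma> v = \<phi> v"
  using assms reachable_colouring4 unfolding frozen_def by blast

lemma finite_neighbours:
  assumes "graph V E"
  shows "finite (neighbours E v)"
  using assms unfolding graph_def neighbours_def
  by (metis (no_types, lifting) mem_Collect_eq rev_finite_subset subsetI)

lemma recolour_step_fun_upd:
  assumes g: "graph V E" and c: "colouring4 V E \<gamma>" and "v \<in> V"
    and k: "k \<in> {1,2,3,4}" "k \<noteq> \<gamma> v" "k \<notin> \<gamma> ` neighbours E v"
  shows "recolour_step V E \<gamma> (\<gamma>(v := k))"
proof -
  have "colouring4 V E (\<gamma>(v := k))"
    unfolding colouring4_def
  proof (intro conjI allI impI ballI)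
    fix x y assume e: "E x y"
    then have "x \<noteq> y" "E y x" using g unfolding graph_def by auto
    with e c k(3) show "(\<gamma>(v := k)) x \<noteq> (\<gamma>(v := k)) y"
      unfolding colouring4_def neighbours_def by (auto simp: image_iff)
  qed (use c k \<open>v \<in> V\<close> in \<open>auto simp: colouring4_def\<close>)
  moreover have "\<exists>!x. \<gamma> x \<noteq> (\<gamma>(v := k)) x"
    using k(2) by (intro ex1I[of _ v]) (auto split: if_splits)
  ultimately show ?thesis
    using c unfolding recolour_step_def by blast
qed

lemma frozen_neighbourhood_covers_colours:
  assumes g: "graph V E" and c: "colouring4 V E \<phi>" and "v \<in> V"
    and fr: "frozen V E \<phi> v" and r: "reachable V E \<phi> \<gamma>"
  shows "{1,2,3,4} - {\<phi> v} \<subseteq> \<gamma> ` neighbours E v"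
proof
  fix k assume k: "k \<in> {1,2,3,4} - {\<phi> v}"
  have \<gamma>v: "\<gamma> v = \<phi> v" using frozenD[OF fr c r] .
  show "k \<in> \<gamma> ` neighbours E v"
  proof (rule ccontr)
    assume "k \<notin> \<gamma> ` neighbours E v"
    with k \<gamma>v have "recolour_step V E \<gamma> (\<gamma>(v := k))"
      using recolour_step_fun_upd[OF g reachable_colouring4[OF r c] \<open>v \<in> V\<close>] by auto
    with r have "reachable V E \<phi> (\<gamma>(v := k))"
      unfolding reachable_def by auto
    from frozenD[OF fr c this] k show False by simp
  qed
qed

lemma card3_subset_insert_eq:
  assumes "card S = 3" "S \<subseteq> {a, x, y}" "S \<subseteq> {a, x', y'}" "x = x' \<or> y = y'"
  shows "x = x' \<and> y = y'"
proof -
  have "card {a, x, y} \<le> 3" "card {a, x', y'} \<le> 3"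
    by (simp_all add: card_insert_le_m1)
  with assms(1-3) have S: "S = {a, x, y}" "S = {a, x', y'}"
    by (metis card_seteq finite.emptyI finite.insertI)+
  have distinct: "p \<noteq> a \<and> q \<noteq> a \<and> p \<noteq> q" if "card {a, p, q} = 3" for p q
    using that by (cases "p = a"; cases "q = a"; cases "p = q") (auto simp: card_insert_if)
  have "x \<noteq> a \<and> y \<noteq> a \<and> x \<noteq> y" "x' \<noteq> a \<and> y' \<noteq> a \<and> x' \<noteq> y'"
    using distinct assms(1) S by metis+
  moreover have "x \<in> {a, x', y'}" "y \<in> {a, x', y'}" "x' \<in> {a, x, y}" "y' \<in> {a, x, y}"
    using S by blast+
  ultimately show ?thesis using assms(4) by auto
qed

lemma reachable_keeps_other_neighbour_colours:
  assumes g: "graph V E" and c: "colouring4 V E \<phi>" and "v \<in> V" and "frozen V E \<phi> v"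
    and N: "neighbours E v = {u1, u2, w1, w2}" and "w1 \<noteq> w2"
    and "frozen V E \<phi> u1" "frozen V E \<phi> u2" "\<phi> u1 = \<phi> u2"
    and "reachable V E \<phi> \<gamma>"
  shows "\<gamma> w1 = \<phi> w1 \<and> \<gamma> w2 = \<phi> w2"
proof -
  let ?S = "{1,2,3,4} - {\<phi> v}"
  have covers: "?S \<subseteq> {\<phi> u1, \<delta> w1, \<delta> w2}" if "reachable V E \<phi> \<delta>" for \<delta>
    using frozen_neighbourhood_covers_colours[OF g c \<open>v \<in> V\<close> \<open>frozen V E \<phi> v\<close> that] N
      frozenD[OF _ c that] assms(7-9) by auto
  have "\<phi> v \<in> {1,2,3,4}" using c \<open>v \<in> V\<close> unfolding colouring4_def by blast
  then have card_S: "card ?S = 3" by (subst card_Diff_singleton) auto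
  have base: "?S \<subseteq> {\<phi> u1, \<phi> w1, \<phi> w2}"
    using covers[of \<phi>] unfolding reachable_def by blast
  from \<open>reachable V E \<phi> \<gamma>\<close> show ?thesis
    unfolding reachable_def
  proof (induction rule: rtranclp_induct)
    case (step \<gamma> \<delta>)
    then have "reachable V E \<phi> \<delta>" unfolding reachable_def by auto
    have "\<delta> w1 = \<gamma> w1 \<or> \<delta> w2 = \<gamma> w2"
      using step.hyps(2) \<open>w1 \<noteq> w2\<close> unfolding recolour_step_def by metis
    with step.IH have "\<phi> w1 = \<delta> w1 \<or> \<phi> w2 = \<delta> w2" by auto
    then have "\<phi> w1 = \<delta> w1 \<and> \<phi> w2 = \<delta> w2"
      by (rule card3_subset_insert_eq[OF card_S base covers[OF \<open>reachable V E \<phi> \<delta>\<close>]])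
    then show ?case by (simp only: eq_commute)
  qed simp
qed

theorem lemma8:
  fixes V :: "'a set" and E :: "'a \<Rightarrow> 'a \<Rightarrow> bool" and \<phi> :: "'a \<Rightarrow> nat" and v u1 u2 :: 'a
  assumes "graph V E"
    and "colouring4 V E \<phi>"
    and "v \<in> V"
    and "degree E v = 4"
    and "frozen V E \<phi> v"
    and "E v u1" and "E v u2" and "u1 \<noteq> u2"
    and "frozen V E \<phi> u1" and "frozen V E \<phi> u2"
    and "\<phi> u1 = \<phi> u2"
  shows "\<forall>u. E v u \<longrightarrow> frozen V E \<phi> u"
proof -
  let ?N = "neighbours E v"
  have u12: "u1 \<in> ?N" "u2 \<in> ?N" using assms(6,7) unfolding neighbours_def by auto
  have "card (?N - {u1, u2}) = 2"
    using assms(4,8) u12 finite_neighbours[OF assms(1)]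
    unfolding degree_def by (simp add: card_Diff_subset)
  then obtain w1 w2 where w: "?N - {u1, u2} = {w1, w2}" "w1 \<noteq> w2" by (meson card_2_iff)
  with u12 have N: "?N = {u1, u2, w1, w2}" by auto
  have "frozen V E \<phi> w1 \<and> frozen V E \<phi> w2"
    using reachable_keeps_other_neighbour_colours[OF assms(1-3,5) N w(2) assms(9-11)]
    unfolding frozen_def by simp
  moreover have "u \<in> {u1, u2, w1, w2}" if "E v u" for u
    using N that unfolding neighbours_def by blast
  ultimately show ?thesis using assms(9,10) by blast
qed

end
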